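(* Let $q$ be a prime power and $d$ an integer with $5\le d\le q$. Let $\mathcal C$ be the $[q+1,q+2-d,d]_q$ normalized GDRS code and $\mathcal V^{(2)}$ a coset of weight $2$ of $\mathcal C$ with coset leader $\mathbf v_2(j_1,j_2;\gamma_1,\gamma_2)$. Let $\beta$ be a primitive element of $\mathbb F_q$ and let $\lambda(\gamma_1,\gamma_2)\in\mathbb Z_{q-1}$ satisfy $\beta^{\lambda(\gamma_1,\gamma_2)}=-\gamma_2/\gamma_1$. Then the number $B_{d-2}(\mathcal V^{(2)})$ of vectors of weight $d-2$ in $\mathcal V^{(2)}$ does not depend on the positions $j_1,j_2$ and equals $\mathrm P^+_{q-1,d-2}(\lambda(\gamma_1,\gamma_2))$.
   Context: Normalized GDRS code: the $\mathbb F_q$-linear code of length $q+1$ which is the kernel of the $(d-1)\times(q+1)$ matrix whose first $q$ columns are $(1,m,\dots,m^{d-2})^T$, $m$ running over $\mathbb F_q$, and whose last column is $(0,\dots,0,1)^T$. A coset of weight $2$ is a coset $\mathbf v+\mathcal C$ of minimum Hamming weight $2$; a coset leader is a vector of minimum weight in it. $\mathbf v_2(j_1,j_2;\gamma_1,\gamma_2)$ is the vector with $\gamma_1,\gamma_2\in\mathbb F_q^*$ in positions $j_1\ne j_2$ and zeros elsewhere. For positive integers $\mu<R$ and $\lambda\in\mathbb Z_R$, $\mathrm P^+_{R,\mu}(\lambda)$ is the number of $\mu$-element subsets of $\mathbb Z_R$ whose elements sum to $\lambda$ in $\mathbb Z_R$. *)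

theory Defs
  imports Main
begin

text \<open>Positions of a code of length q+1 over the finite field 'a with q = CARD('a):
  position Some m (m in F_q) carries the column (1,m,...,m^(d-2)), position None
  carries the last column (0,...,0,1).\<close>

definition hweight :: "('a option \<Rightarrow> 'a::zero) \<Rightarrow> nat" where
  "hweight v = card {j. v j \<noteq> 0}"

definition GDRS_code :: "nat \<Rightarrow> ('a::{finite,field} option \<Rightarrow> 'a) set" where
  "GDRS_code d = {c. \<forall>i < d - 1.
      (\<Sum>m\<in>UNIV. c (Some m) * m ^ i) + (if i = d - 2 then c None else 0) = 0}"

definition coset :: "('a option \<Rightarrow> 'a::{finite,field}) \<Rightarrow> ('a option \<Rightarrow> 'a) set \<Rightarrow> ('a option \<Rightarrow> 'a) set" where
  "coset v C = {(\<lambda>j. v j + c j) | c. c \<in> C}"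

definition coset_weight :: "('a option \<Rightarrow> 'a::{finite,field}) set \<Rightarrow> nat" where
  "coset_weight V = (LEAST w. \<exists>x\<in>V. hweight x = w)"

definition v2 :: "'a option \<Rightarrow> 'a option \<Rightarrow> 'a \<Rightarrow> 'a \<Rightarrow> ('a option \<Rightarrow> 'a::zero)" where
  "v2 j1 j2 g1 g2 = (\<lambda>j. if j = j1 then g1 else if j = j2 then g2 else 0)"

definition B_count :: "nat \<Rightarrow> ('a option \<Rightarrow> 'a::{finite,field}) set \<Rightarrow> nat" where
  "B_count w V = card {x \<in> V. hweight x = w}"

definition primitive_elem :: "'a::{finite,field} \<Rightarrow> bool" where
  "primitive_elem b \<longleftrightarrow> b \<noteq> 0 \<and> (\<forall>x. x \<noteq> 0 \<longrightarrow> (\<exists>k::nat. b ^ k = x))"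

definition P_plus :: "nat \<Rightarrow> nat \<Rightarrow> nat \<Rightarrow> nat" where
  "P_plus R \<mu> l = card {S. S \<subseteq> {0..<R} \<and> card S = \<mu> \<and> (\<Sum>S) mod R = l mod R}"

end

theory Submission
  imports Defs "HOL-Computational_Algebra.Polynomial"
begin

text \<open>
  The normalized GDRS code C is MDS: pairing a codeword with a polynomial of degree at most
  d - 2 that vanishes on all but one point of its affine support shows that nonzero codewords
  have weight at least d, and Lagrange interpolation exhibits, for every d-set S of positions,
  a codeword w_S with support S, unique up to a scalar.

  Let v = v2(j1, j2; g1, g2) and let x in v + C have weight d - 2 and support T. Then x - v is
  a nonzero codeword supported in S = T union {j1, j2}, so T avoids j1, j2 and x - v is a multiple
  of w_S; comparing the entries at j1 and j2 gives w_S(j2) / w_S(j1) = g2 / g1. Conversely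
  every such T is the support of exactly one x, so B_{d-2} counts these sets T.

  Viewing the positions as the projective line over F_q, w_S(j2) / w_S(j1) equals
  -(prod over t in T of phi(t)) for the Moebius map phi(t) = (j1 - t) / (j2 - t), which maps
  the q - 1 positions other than j1, j2 bijectively onto F_q^*. Writing F_q^* as the powers
  beta^k, 0 <= k < q - 1, turns prod phi(t) = -g2 / g1 = beta^lambda into a condition on the
  sum of the exponents modulo q - 1.
\<close>

subsection \<open>Finite fields and primitive elements\<close>

lemma power_card_minus_1_eq_1:
  fixes x :: "'a::{finite,field}"
  assumes "x \<noteq> 0"
  shows "x ^ (card (UNIV::'a set) - 1) = 1"
proof -
  have "(\<Prod>y\<in>UNIV-{0}. x * y) = (\<Prod>y\<in>UNIV-{0}. y)"
    by (rule prod.reindex_bij_witness[of _ "\<lambda>y. y / x" "\<lambda>y. x * y"]) (use assms in auto)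
  then show ?thesis
    by (simp add: prod.distrib card_Diff_subset)
qed

lemma power_mod_card_minus_1:
  fixes b :: "'a::{finite,field}"
  assumes "b \<noteq> 0"
  shows "b ^ (k mod (card (UNIV::'a set) - 1)) = b ^ k"
proof -
  let ?N = "card (UNIV::'a set) - 1"
  have "b ^ k = (b ^ ?N) ^ (k div ?N) * b ^ (k mod ?N)"
    by (metis mult_div_mod_eq power_add power_mult)
  also have "\<dots> = b ^ (k mod ?N)"
    by (simp only: power_card_minus_1_eq_1[OF assms] power_one mult_1)
  finally show ?thesis ..
qed

lemma card_UNIV_field_ge_2: "2 \<le> card (UNIV::'a::{finite,field} set)"
  using card_mono[of UNIV "{0::'a, 1}"] by simp

lemma bij_betw_primitive_power:
  fixes b :: "'a::{finite,field}"
  assumes "primitive_elem b"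
  shows "bij_betw (\<lambda>k. b ^ k) {0..<card (UNIV::'a set) - 1} (UNIV - {0})"
proof -
  let ?N = "card (UNIV::'a set) - 1"
  have b0: "b \<noteq> 0"
    using assms unfolding primitive_elem_def by simp
  have "x \<in> (\<lambda>k. b ^ k) ` {0..<?N}" if "x \<noteq> 0" for x
  proof -
    obtain k where "b ^ k = x"
      using assms \<open>x \<noteq> 0\<close> unfolding primitive_elem_def by blast
    moreover have "k mod ?N < ?N"
      using card_UNIV_field_ge_2[where 'a='a] by simp
    ultimately show ?thesis
      using power_mod_card_minus_1[OF b0, of k] by (auto intro!: image_eqI[of _ _ "k mod ?N"])
  qed
  then have image: "(\<lambda>k. b ^ k) ` {0..<?N} = UNIV - {0}"
    using b0 by auto
  moreover have "card (UNIV - {0::'a}) = card {0..<?N}"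
    by (simp add: card_Diff_subset)
  ultimately show ?thesis
    by (simp add: bij_betw_def eq_card_imp_inj_on)
qed

lemma primitive_elem_power_eq_iff:
  fixes b :: "'a::{finite,field}"
  assumes "primitive_elem b"
  shows "b ^ m = b ^ n \<longleftrightarrow> m mod (card (UNIV::'a set) - 1) = n mod (card (UNIV::'a set) - 1)"
proof -
  let ?N = "card (UNIV::'a set) - 1"
  have b0: "b \<noteq> 0"
    using assms unfolding primitive_elem_def by simp
  have "inj_on (\<lambda>k. b ^ k) {0..<?N}"
    using bij_betw_primitive_power[OF assms] by (rule bij_betw_imp_inj_on)
  moreover have "m mod ?N < ?N" "n mod ?N < ?N"
    using card_UNIV_field_ge_2[where 'a='a] by simp_all
  ultimately have "b ^ (m mod ?N) = b ^ (n mod ?N) \<longleftrightarrow> m mod ?N = n mod ?N"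
    by (simp add: inj_on_eq_iff)
  then show ?thesis
    by (simp only: power_mod_card_minus_1[OF b0])
qed

lemma card_subsets_prod_eq_bij:
  assumes "bij_betw \<phi> A B"
  shows "card {T. T \<subseteq> A \<and> card T = k \<and> (\<Prod>t\<in>T. \<phi> t) = y}
       = card {U. U \<subseteq> B \<and> card U = k \<and> \<Prod>U = (y::'b::comm_monoid_mult)}"
proof -
  have "bij_betw (image \<phi>) {T \<in> Pow A. card T = k \<and> (\<Prod>t\<in>T. \<phi> t) = y}
      {U \<in> Pow B. card U = k \<and> \<Prod>U = y}"
  proof (rule bij_betw_Collect[OF bij_betw_image_Pow[OF assms]])
    fix T assume "T \<in> Pow A"
    then have "inj_on \<phi> T"
      using assms by (auto simp: bij_betw_def intro: inj_on_subset)
    then show "card (\<phi> ` T) = k \<and> \<Prod>(\<phi> ` T) = y \<longleftrightarrow> card T = k \<and> (\<Prod>t\<in>T. \<phi> t) = y"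
      by (simp add: card_image prod.reindex)
  qed
  then show ?thesis
    by (simp add: bij_betw_same_card Pow_def)
qed

lemma P_plus_eq_card_subsets_prod:
  fixes \<beta> :: "'a::{finite,field}"
  assumes "primitive_elem \<beta>"
  shows "P_plus (card (UNIV::'a set) - 1) k l
       = card {U. U \<subseteq> UNIV - {0} \<and> card U = k \<and> \<Prod>U = \<beta> ^ l}"
proof -
  let ?N = "card (UNIV::'a set) - 1"
  have "P_plus ?N k l = card {S. S \<subseteq> {0..<?N} \<and> card S = k \<and> (\<Prod>n\<in>S. \<beta> ^ n) = \<beta> ^ l}"
    unfolding P_plus_def
    by (simp add: power_sum[symmetric] primitive_elem_power_eq_iff[OF assms])
  also have "\<dots> = card {U. U \<subseteq> UNIV - {0} \<and> card U = k \<and> \<Prod>U = \<beta> ^ l}"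
    by (rule card_subsets_prod_eq_bij[OF bij_betw_primitive_power[OF assms]])
  finally show ?thesis .
qed

lemma poly_eqI_card_roots:
  fixes p r :: "'a::idom poly"
  assumes "finite F" "degree p < card F" "degree r < card F" "\<And>x. x \<in> F \<Longrightarrow> poly p x = poly r x"
  shows "p = r"
proof (rule ccontr)
  assume "p \<noteq> r"
  then have nz: "p - r \<noteq> 0" by simp
  have "card F \<le> card {x. poly (p - r) x = 0}"
    using assms(4) poly_roots_finite[OF nz] by (intro card_mono) auto
  also have "\<dots> \<le> degree (p - r)"
    by (rule card_poly_roots_bound[OF nz])
  also have "\<dots> \<le> max (degree p) (degree r)"
    by (rule degree_diff_le_max)
  finally show False
    using assms(2,3) by simp
qed

lemma sum_lagrange_weights_eq_coeff:
  fixes F :: "'a::field set" and p :: "'a poly"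
  assumes "finite F" and "F \<noteq> {}" and "degree p < card F"
  shows "(\<Sum>m\<in>F. poly p m / (\<Prod>m'\<in>F - {m}. m - m')) = coeff p (card F - 1)"
proof -
  define P where "P m = (\<Prod>m'\<in>F - {m}. [:-m', 1:])" for m
  define L where "L = (\<Sum>m\<in>F. smult (poly p m / (\<Prod>m'\<in>F - {m}. m - m')) (P m))"
  have poly_P: "poly (P m) x = (\<Prod>m'\<in>F - {m}. x - m')" for m x
    unfolding P_def by (simp add: poly_prod)
  have degree_P: "degree (P m) = card F - 1" if "m \<in> F" for m
    unfolding P_def using that assms(1) by (subst degree_prod_eq_sum_degree) auto
  have coeff_P: "coeff (P m) (card F - 1) = 1" if "m \<in> F" for m
    using degree_P[OF that] lead_coeff_prod[of "\<lambda>m'. [:-m', 1:]" "F - {m}"] by (simp add: P_def)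
  have "degree L \<le> card F - 1"
    unfolding L_def using degree_P
    by (intro degree_sum_le[OF assms(1)]) (metis degree_smult_le)
  moreover have "poly L m = poly p m" if "m \<in> F" for m
  proof -
    have "poly L m = (\<Sum>m'\<in>F. poly p m' / (\<Prod>m''\<in>F - {m'}. m' - m'') * poly (P m') m)"
      by (simp add: L_def poly_sum)
    also have "\<dots> = (\<Sum>m'\<in>F. if m' = m then poly p m else 0)"
      using assms(1) \<open>m \<in> F\<close> by (intro sum.cong) (auto simp: poly_P)
    also have "\<dots> = poly p m"
      using assms(1) \<open>m \<in> F\<close> by simp
    finally show ?thesis .
  qed
  ultimately have "p = L"
    using assms by (intro poly_eqI_card_roots[of F]) auto
  then have "coeff p (card F - 1) = coeff L (card F - 1)"
    by (rule arg_cong)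
  also have "\<dots> = (\<Sum>m\<in>F. poly p m / (\<Prod>m'\<in>F - {m}. m - m') * coeff (P m) (card F - 1))"
    by (simp add: L_def coeff_sum)
  also have "\<dots> = (\<Sum>m\<in>F. poly p m / (\<Prod>m'\<in>F - {m}. m - m'))"
    by (intro sum.cong refl) (simp only: coeff_P mult_1_right)
  finally show ?thesis ..
qed

lemma poly_eq_sum_atMost:
  fixes p :: "'a::comm_semiring_1 poly"
  assumes "degree p \<le> n"
  shows "poly p x = (\<Sum>i\<le>n. coeff p i * x ^ i)"
proof -
  have "(\<Sum>i\<le>n. coeff p i * x ^ i) = (\<Sum>i\<le>degree p. coeff p i * x ^ i)"
    by (rule sum.mono_neutral_right) (use assms le_degree in \<open>force+\<close>)
  then show ?thesis
    by (simp only: poly_altdef[of p x])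
qed

subsection \<open>Minimum distance of the GDRS code\<close>

lemma card_option_set:
  fixes S :: "'a::finite option set"
  shows "card S = card {m. Some m \<in> S} + (if None \<in> S then 1 else 0)"
proof -
  have "S = Some ` {m. Some m \<in> S} \<union> (S \<inter> {None})"
  proof (rule set_eqI)
    show "j \<in> S \<longleftrightarrow> j \<in> Some ` {m. Some m \<in> S} \<union> (S \<inter> {None})" for j
      by (cases j) auto
  qed
  then have "card S = card (Some ` {m. Some m \<in> S} \<union> (S \<inter> {None}))"
    by (rule arg_cong)
  also have "\<dots> = card (Some ` {m. Some m \<in> S}) + card (S \<inter> {None})"
    by (rule card_Un_disjoint) auto
  also have "card (Some ` {m. Some m \<in> S}) = card {m. Some m \<in> S}"
    by (rule card_image) simp
  also have "card (S \<inter> {None}) = (if None \<in> S then 1 else 0)"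
    by simp
  finally show ?thesis .
qed

lemma hweight_eq_card_Some:
  fixes c :: "'a::{finite,zero} option \<Rightarrow> 'a"
  shows "hweight c = card {m. c (Some m) \<noteq> 0} + (if c None \<noteq> 0 then 1 else 0)"
  using card_option_set[of "{j. c j \<noteq> 0}"] by (simp add: hweight_def)

lemma GDRS_code_smult:
  assumes "c \<in> GDRS_code d"
  shows "(\<lambda>j. k * c j) \<in> GDRS_code d"
  using assms unfolding GDRS_code_def
  by (auto simp: mult.assoc sum_distrib_left[symmetric] distrib_left[symmetric])

lemma GDRS_code_diff:
  assumes "c \<in> GDRS_code d" and "e \<in> GDRS_code d"
  shows "(\<lambda>j. c j - e j) \<in> GDRS_code d"
  unfolding GDRS_code_def
proof (intro CollectI allI impI)
  fix i assume "i < d - 1"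
  then have "((\<Sum>m\<in>UNIV. c (Some m) * m ^ i) + (if i = d - 2 then c None else 0))
      - ((\<Sum>m\<in>UNIV. e (Some m) * m ^ i) + (if i = d - 2 then e None else 0)) = 0"
    using assms by (simp add: GDRS_code_def)
  then show "(\<Sum>m\<in>UNIV. (c (Some m) - e (Some m)) * m ^ i)
      + (if i = d - 2 then c None - e None else 0) = 0"
    by (cases "i = d - 2") (simp_all add: sum_subtractf algebra_simps)
qed

text \<open>
  The vectors (p(m))_m, with coeff p (d - 2) at position None, for degree p <= d - 2 span the
  dual of the GDRS code; eval_pairing is the inner product with them.
\<close>

definition eval_pairing :: "('a::{finite,field} option \<Rightarrow> 'a) \<Rightarrow> nat \<Rightarrow> 'a poly \<Rightarrow> 'a" where
  "eval_pairing c d p = (\<Sum>m\<in>UNIV. c (Some m) * poly p m) + coeff p (d - 2) * c None"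

lemma eval_pairing_eq_0:
  assumes "c \<in> GDRS_code d" and "2 \<le> d" and "degree p \<le> d - 2"
  shows "eval_pairing c d p = 0"
proof -
  have "eval_pairing c d p = (\<Sum>i\<le>d - 2. coeff p i *
      ((\<Sum>m\<in>UNIV. c (Some m) * m ^ i) + (if i = d - 2 then c None else 0)))"
    using assms(3)
    by (simp add: eval_pairing_def poly_eq_sum_atMost sum_distrib_left sum_distrib_right
        sum.distrib algebra_simps sum.swap[of _ UNIV] if_distrib[of "\<lambda>z. coeff p _ * z"] cong: if_cong)
  also have "\<dots> = 0"
    using assms(1,2) by (intro sum.neutral) (auto simp: GDRS_code_def)
  finally show ?thesis .
qed

lemma GDRS_codeI:
  assumes "\<And>i. i < d - 1 \<Longrightarrow> eval_pairing c d (monom 1 i) = 0"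
  shows "c \<in> GDRS_code d"
  unfolding GDRS_code_def
proof (intro CollectI allI impI)
  fix i assume "i < d - 1"
  then show "(\<Sum>m\<in>UNIV. c (Some m) * m ^ i) + (if i = d - 2 then c None else 0) = 0"
    using assms[of i] by (cases "i = d - 2") (simp_all add: eval_pairing_def poly_monom)
qed

lemma GDRS_code_eq_0_if_hweight_less:
  assumes c: "c \<in> GDRS_code d" and "2 \<le> d" and "hweight c < d"
  shows "c = (\<lambda>_. 0)"
proof -
  define F where "F = {m. c (Some m) \<noteq> 0}"
  have weight: "card F + (if c None \<noteq> 0 then 1 else 0) < d"
    using assms(3) by (simp add: hweight_eq_card_Some F_def)
  have affine: "c (Some a) = 0" for a
  proof (rule ccontr)
    assume "c (Some a) \<noteq> 0"
    then have "a \<in> F" by (simp add: F_def)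
    define p where "p = (\<Prod>m\<in>F - {a}. [:-m, 1:])"
    have "degree p = card F - 1"
      unfolding p_def using \<open>a \<in> F\<close> by (subst degree_prod_eq_sum_degree) auto
    moreover have "card F \<ge> 1"
      using \<open>a \<in> F\<close> by (auto simp: Suc_le_eq card_gt_0_iff)
    ultimately have degree_p: "degree p \<le> d - 2" and "coeff p (d - 2) * c None = 0"
      using weight by (auto simp: coeff_eq_0 split: if_splits)
    moreover have "(\<Sum>m\<in>UNIV. c (Some m) * poly p m)
        = (\<Sum>m\<in>UNIV. if m = a then c (Some a) * poly p a else 0)"
      by (intro sum.cong) (auto simp: F_def p_def poly_prod)
    ultimately have "eval_pairing c d p = c (Some a) * poly p a"
      by (simp add: eval_pairing_def)
    then have "c (Some a) * poly p a = 0"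
      using eval_pairing_eq_0[OF c assms(2) degree_p] by simp
    moreover have "poly p a \<noteq> 0"
      by (simp add: p_def poly_prod)
    ultimately show False
      using \<open>c (Some a) \<noteq> 0\<close> by simp
  qed
  have "d - 2 < d - 1"
    using assms(2) by simp
  then have "(\<Sum>m\<in>UNIV. c (Some m) * m ^ (d - 2)) + c None = 0"
    using c unfolding GDRS_code_def by fastforce
  then have "c None = 0"
    by (simp add: affine)
  with affine show ?thesis
    by (intro ext) (metis option.exhaust)
qed

subsection \<open>Codewords of minimum weight\<close>

text \<open>
  Positions are the points of the projective line over 'a, None being the point at infinity.
\<close>

definition proj_diff :: "'a::field option \<Rightarrow> 'a option \<Rightarrow> 'a" where
  "proj_diff x y = (case (x, y) of (Some a, Some b) \<Rightarrow> a - b | _ \<Rightarrow> 1)"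

lemma proj_diff_eq_0_iff: "proj_diff x y = 0 \<longleftrightarrow> x = y \<and> x \<noteq> None"
  by (auto simp: proj_diff_def split: option.splits)

text \<open>
  On affine positions these are the Lagrange weights 1 / prod (m - m'); the sign at infinity is
  forced by the last parity check.
\<close>

definition codeword_on :: "'a::field option set \<Rightarrow> 'a option \<Rightarrow> 'a" where
  "codeword_on S j =
    (if j \<in> S then (if j = None then -1 else 1) / (\<Prod>k\<in>S - {j}. proj_diff j k) else 0)"

lemma codeword_on_nonzero_iff:
  fixes S :: "'a::{finite,field} option set"
  shows "codeword_on S j \<noteq> 0 \<longleftrightarrow> j \<in> S"
  by (auto simp: codeword_on_def proj_diff_eq_0_iff)

lemma prod_proj_diff_Some:
  fixes S :: "'a::{finite,field} option set"
  shows "(\<Prod>k\<in>S - {Some m}. proj_diff (Some m) k) = (\<Prod>m'\<in>{m'. Some m' \<in> S} - {m}. m - m')"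
proof -
  have "(\<Prod>k\<in>S - {Some m}. proj_diff (Some m) k)
      = (\<Prod>k\<in>Some ` ({m'. Some m' \<in> S} - {m}). proj_diff (Some m) k)"
    by (rule prod.mono_neutral_right) (auto simp: proj_diff_def split: option.split_asm)
  then show ?thesis
    by (simp add: prod.reindex proj_diff_def)
qed

lemma codeword_on_in_GDRS_code:
  fixes S :: "'a::{finite,field} option set"
  assumes "card S = d" and "2 \<le> d"
  shows "codeword_on S \<in> GDRS_code d"
proof (rule GDRS_codeI)
  fix i assume "i < d - 1"
  define F where "F = {m. Some m \<in> S}"
  have card_S: "card S = card F + (if None \<in> S then 1 else 0)"
    unfolding F_def by (rule card_option_set)
  then have "F \<noteq> {}" and "degree (monom (1::'a) i) < card F"
    using assms \<open>i < d - 1\<close> by (auto simp: degree_monom_eq split: if_splits)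
  have "(\<Sum>m\<in>UNIV. codeword_on S (Some m) * poly (monom 1 i) m)
      = (\<Sum>m\<in>UNIV. if m \<in> F then poly (monom 1 i) m / (\<Prod>m'\<in>F - {m}. m - m') else 0)"
    by (intro sum.cong) (simp_all add: codeword_on_def prod_proj_diff_Some F_def)
  also have "\<dots> = (\<Sum>m\<in>F. poly (monom 1 i) m / (\<Prod>m'\<in>F - {m}. m - m'))"
    by (simp add: sum.If_cases)
  also have "\<dots> = coeff (monom 1 i) (card F - 1)"
    by (rule sum_lagrange_weights_eq_coeff) (simp_all add: \<open>F \<noteq> {}\<close> \<open>degree _ < card F\<close>)
  finally have "(\<Sum>m\<in>UNIV. codeword_on S (Some m) * poly (monom 1 i) m)
      = (if card F - 1 = i then 1 else 0)"
    by simp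
  moreover have "codeword_on S None = (if None \<in> S then -1 else 0)"
    by (simp add: codeword_on_def proj_diff_def)
  ultimately have "eval_pairing (codeword_on S) d (monom 1 i)
      = (if card F - 1 = i then 1 else 0) + (if i = d - 2 then 1 else 0) * (if None \<in> S then -1 else 0)"
    unfolding eval_pairing_def by (simp only: coeff_monom)
  also have "\<dots> = 0"
  proof (cases "None \<in> S")
    case True
    then have "card F - 1 = d - 2"
      using card_S assms(1) by simp
    with True show ?thesis
      by simp
  next
    case False
    then have "card F - 1 \<noteq> i"
      using card_S assms(1) \<open>i < d - 1\<close> by simp
    with False show ?thesis
      by simp
  qed
  finally show "eval_pairing (codeword_on S) d (monom 1 i) = 0" .
qed

lemma GDRS_code_supported_eq_smult:
  fixes c :: "'a::{finite,field} option \<Rightarrow> 'a"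
  assumes c: "c \<in> GDRS_code d" and "2 \<le> d" and "card S = d"
    and supp: "{i. c i \<noteq> 0} \<subseteq> S" and "j \<in> S"
  shows "c = (\<lambda>i. c j / codeword_on S j * codeword_on S i)"
proof -
  define e where "e i = c i - c j / codeword_on S j * codeword_on S i" for i
  have "e \<in> GDRS_code d"
    unfolding e_def using c codeword_on_in_GDRS_code[OF assms(3,2)]
    by (intro GDRS_code_diff GDRS_code_smult)
  moreover have "hweight e < d"
  proof -
    have "e j = 0"
      using \<open>j \<in> S\<close> codeword_on_nonzero_iff[of S j] by (simp add: e_def)
    moreover have "e i = 0" if "i \<notin> S" for i
      using that supp codeword_on_nonzero_iff[of S i] by (auto simp: e_def)
    ultimately have "{i. e i \<noteq> 0} \<subseteq> S - {j}"
      by blast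
    then have "hweight e \<le> card (S - {j})"
      unfolding hweight_def by (rule card_mono[OF finite])
    then show ?thesis
      using \<open>j \<in> S\<close> assms(2,3) by simp
  qed
  ultimately have "e = (\<lambda>_. 0)"
    using assms(2) by (intro GDRS_code_eq_0_if_hweight_less)
  show ?thesis
  proof
    fix i
    show "c i = c j / codeword_on S j * codeword_on S i"
      using fun_cong[OF \<open>e = (\<lambda>_. 0)\<close>, of i] by (simp add: e_def)
  qed
qed

lemma codeword_on_ratio:
  fixes j1 j2 :: "'a::{finite,field} option"
  assumes "j1 \<noteq> j2" and "T \<subseteq> - {j1, j2}"
  shows "codeword_on (insert j1 (insert j2 T)) j2 / codeword_on (insert j1 (insert j2 T)) j1
       = - (\<Prod>t\<in>T. proj_diff j1 t / proj_diff j2 t)"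
proof -
  define S where "S = insert j1 (insert j2 T)"
  define sign where "sign j = (if j = None then -1 else 1 :: 'a)" for j :: "'a option"
  have "S - {j1} = insert j2 T" and "S - {j2} = insert j1 T" and "j1 \<notin> T" and "j2 \<notin> T"
    using assms by (auto simp: S_def)
  then have w1: "codeword_on S j1 = sign j1 / (proj_diff j1 j2 * (\<Prod>t\<in>T. proj_diff j1 t))"
    and w2: "codeword_on S j2 = sign j2 / (proj_diff j2 j1 * (\<Prod>t\<in>T. proj_diff j2 t))"
    by (simp_all add: codeword_on_def sign_def S_def)
  have swap: "sign j2 * proj_diff j1 j2 = - (sign j1 * proj_diff j2 j1)"
    using assms(1) by (cases j1; cases j2) (simp_all add: sign_def proj_diff_def)
  have "proj_diff j1 j2 \<noteq> 0" "sign j1 * proj_diff j2 j1 \<noteq> 0"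
    and "(\<Prod>t\<in>T. proj_diff j1 t) \<noteq> 0" "(\<Prod>t\<in>T. proj_diff j2 t) \<noteq> 0"
    using assms by (auto simp: proj_diff_eq_0_iff sign_def)
  then have "codeword_on S j2 / codeword_on S j1
      = sign j2 * proj_diff j1 j2 / (sign j1 * proj_diff j2 j1)
        * ((\<Prod>t\<in>T. proj_diff j1 t) / (\<Prod>t\<in>T. proj_diff j2 t))"
    unfolding w1 w2 by (simp add: field_simps)
  also have "\<dots> = - ((\<Prod>t\<in>T. proj_diff j1 t) / (\<Prod>t\<in>T. proj_diff j2 t))"
    using swap \<open>sign j1 * proj_diff j2 j1 \<noteq> 0\<close> by simp
  finally show ?thesis
    by (simp add: S_def prod_dividef)
qed

lemma diff_quotient_inj:
  fixes a b t s :: "'a::field"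
  assumes "a \<noteq> b" and "t \<noteq> b" and "s \<noteq> b" and "(a - t) / (b - t) = (a - s) / (b - s)"
  shows "t = s"
proof -
  have "(a - t) * (b - s) = (a - s) * (b - t)"
    using assms by (simp add: field_simps)
  then have "(a - b) * (t - s) = 0"
    by algebra
  then show ?thesis
    using assms(1) by simp
qed

text \<open>The Moebius transformation of the projective line sending j1 to 0 and j2 to infinity.\<close>

lemma bij_betw_proj_diff_quotient:
  fixes j1 j2 :: "'a::{finite,field} option"
  assumes "j1 \<noteq> j2"
  shows "bij_betw (\<lambda>t. proj_diff j1 t / proj_diff j2 t) (- {j1, j2}) (UNIV - {0})"
proof -
  let ?\<phi> = "\<lambda>t. proj_diff j1 t / proj_diff j2 t"
  have inj: "inj_on ?\<phi> (- {j1, j2})"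
  proof (rule inj_onI)
    fix x y assume "x \<in> - {j1, j2}" "y \<in> - {j1, j2}" "?\<phi> x = ?\<phi> y"
    then show "x = y"
      using assms diff_quotient_inj
      by (cases j1; cases j2; cases x; cases y) (auto simp: proj_diff_def field_simps)
  qed
  have "?\<phi> ` (- {j1, j2}) \<subseteq> UNIV - {0}"
    by (auto simp: proj_diff_eq_0_iff)
  moreover have "card (- {j1, j2}) = card (UNIV - {0::'a})"
    using assms card_option_set[of "UNIV :: 'a option set"] by (simp add: Compl_eq_Diff_UNIV card_Diff_subset)
  then have "card (?\<phi> ` (- {j1, j2})) = card (UNIV - {0::'a})"
    by (simp only: card_image[OF inj])
  ultimately have "?\<phi> ` (- {j1, j2}) = UNIV - {0}"
    by (intro card_subset_eq) simp_all
  with inj show ?thesis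
    by (simp add: bij_betw_def)
qed

subsection \<open>Vectors of weight d - 2 in a coset of weight 2\<close>

lemma mem_coset_iff: "x \<in> coset v C \<longleftrightarrow> (\<lambda>j. x j - v j) \<in> C"
  unfolding coset_def by (auto intro!: exI[of _ "\<lambda>j. x j - v j"])

lemma hweight_v2:
  assumes "j1 \<noteq> j2" and "g1 \<noteq> 0" and "g2 \<noteq> 0"
  shows "hweight (v2 j1 j2 g1 g2) = 2"
proof -
  have "{j. v2 j1 j2 g1 g2 j \<noteq> 0} = {j1, j2}"
    using assms by (auto simp: v2_def)
  then show ?thesis
    using assms(1) by (simp add: hweight_def)
qed

lemma coset_GDRS_code_eq_if_same_support:
  fixes x y :: "'a::{finite,field} option \<Rightarrow> 'a"
  assumes "x \<in> coset v (GDRS_code d)" and "y \<in> coset v (GDRS_code d)"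
    and "2 \<le> d" and "hweight x < d" and "{j. x j \<noteq> 0} = {j. y j \<noteq> 0}"
  shows "x = y"
proof -
  have "(\<lambda>j. x j - y j) \<in> GDRS_code d"
    using GDRS_code_diff[OF assms(1,2)[unfolded mem_coset_iff]] by simp
  moreover have "y j = 0" if "x j = 0" for j
    using assms(5) that by blast
  then have "hweight (\<lambda>j. x j - y j) \<le> hweight x"
    unfolding hweight_def by (intro card_mono) auto
  then have "hweight (\<lambda>j. x j - y j) < d"
    using assms(4) by (rule le_less_trans)
  ultimately have "(\<lambda>j. x j - y j) = (\<lambda>_. 0)"
    using assms(3) by (intro GDRS_code_eq_0_if_hweight_less)
  then show ?thesis
    by (simp add: fun_eq_iff)
qed

lemma coset_v2_support_avoids_and_ratio:
  fixes j1 j2 :: "'a::{finite,field} option"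
  assumes "2 \<le> d" and "d \<noteq> 4" and "j1 \<noteq> j2" and "g1 \<noteq> 0" and "g2 \<noteq> 0"
    and x: "x \<in> coset (v2 j1 j2 g1 g2) (GDRS_code d)" "hweight x = d - 2"
  defines "T \<equiv> {j. x j \<noteq> 0}"
  shows "T \<subseteq> - {j1, j2}"
    and "codeword_on (insert j1 (insert j2 T)) j2 / codeword_on (insert j1 (insert j2 T)) j1 = g2 / g1"
proof -
  define S where "S = insert j1 (insert j2 T)"
  define c where "c = (\<lambda>j. x j - v2 j1 j2 g1 g2 j)"
  have c_code: "c \<in> GDRS_code d"
    using x(1) by (simp add: mem_coset_iff c_def)
  have supp_c: "{j. c j \<noteq> 0} \<subseteq> S"
    by (auto simp: c_def v2_def T_def S_def)
  have "c \<noteq> (\<lambda>_. 0)"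
  proof
    assume "c = (\<lambda>_. 0)"
    then have "x = v2 j1 j2 g1 g2"
      by (simp add: c_def fun_eq_iff)
    then show False
      using x(2) hweight_v2[OF assms(3-5)] assms(2) by simp
  qed
  then have "\<not> hweight c < d"
    using GDRS_code_eq_0_if_hweight_less[OF c_code assms(1)] by blast
  then have "d \<le> card S"
    using card_mono[OF finite supp_c] by (simp add: hweight_def)
  moreover have "card S \<le> card T + 2"
    by (simp add: S_def card_insert_if)
  ultimately show T_avoids: "T \<subseteq> - {j1, j2}"
    using x(2) by (auto simp: S_def T_def hweight_def card_insert_if split: if_splits)
  have "card S = d"
    using T_avoids x(2) assms(1,3) by (auto simp: S_def T_def hweight_def card_insert_if)
  then have "c = (\<lambda>i. c j1 / codeword_on S j1 * codeword_on S i)"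
    using GDRS_code_supported_eq_smult[OF c_code assms(1) _ supp_c] by (simp add: S_def)
  then have "c j2 = c j1 / codeword_on S j1 * codeword_on S j2"
    by (rule fun_cong)
  moreover have "c j1 = - g1" and "c j2 = - g2"
    using T_avoids assms(3) by (auto simp: c_def v2_def T_def)
  moreover have "codeword_on S j1 \<noteq> 0"
    by (simp add: codeword_on_nonzero_iff S_def)
  ultimately show "codeword_on S j2 / codeword_on S j1 = g2 / g1"
    using assms(4) by (simp add: field_simps)
qed

lemma coset_v2_vector_with_support:
  fixes j1 j2 :: "'a::{finite,field} option"
  assumes "2 \<le> d" and "j1 \<noteq> j2" and "g1 \<noteq> 0"
    and T: "T \<subseteq> - {j1, j2}" "card T = d - 2"
    and ratio: "codeword_on (insert j1 (insert j2 T)) j2 / codeword_on (insert j1 (insert j2 T)) j1 = g2 / g1"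
  shows "\<exists>x \<in> coset (v2 j1 j2 g1 g2) (GDRS_code d). {j. x j \<noteq> 0} = T"
proof -
  define S where "S = insert j1 (insert j2 T)"
  define w where "w = codeword_on S"
  define \<kappa> where "\<kappa> = - g1 / w j1"
  define x where "x = (\<lambda>j. v2 j1 j2 g1 g2 j + \<kappa> * w j)"
  have "card S = d"
    using T assms(1,2) by (auto simp: S_def card_insert_if)
  then have "(\<lambda>j. \<kappa> * w j) \<in> GDRS_code d"
    unfolding w_def using assms(1) by (intro GDRS_code_smult codeword_on_in_GDRS_code)
  then have "x \<in> coset (v2 j1 j2 g1 g2) (GDRS_code d)"
    by (simp add: mem_coset_iff x_def)
  moreover have "{j. x j \<noteq> 0} = T"
  proof -
    have w_nonzero: "w j \<noteq> 0 \<longleftrightarrow> j \<in> S" for j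
      by (simp add: w_def codeword_on_nonzero_iff)
    then have "w j1 \<noteq> 0" "\<kappa> \<noteq> 0"
      using assms(3) by (simp_all add: S_def \<kappa>_def)
    have "x j1 = 0"
      using \<open>w j1 \<noteq> 0\<close> by (simp add: x_def \<kappa>_def v2_def)
    moreover have "x j2 = 0"
      using ratio \<open>w j1 \<noteq> 0\<close> assms(2,3)
      by (simp add: x_def \<kappa>_def v2_def w_def S_def field_simps)
    moreover have "x j \<noteq> 0 \<longleftrightarrow> j \<in> T" if "j \<noteq> j1" "j \<noteq> j2" for j
      using that w_nonzero[of j] \<open>\<kappa> \<noteq> 0\<close> by (simp add: x_def v2_def S_def)
    ultimately have "x j \<noteq> 0 \<longleftrightarrow> j \<in> T" for j
      using T(1) by (cases "j = j1 \<or> j = j2") auto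
    then show ?thesis
      by blast
  qed
  ultimately show ?thesis
    by blast
qed

text \<open>The hypothesis d \<noteq> 4 keeps the coset leader itself out of the count.\<close>

lemma B_count_coset_v2:
  fixes j1 j2 :: "'a::{finite,field} option"
  assumes "2 \<le> d" and "d \<noteq> 4" and "j1 \<noteq> j2" and "g1 \<noteq> 0" and "g2 \<noteq> 0"
  shows "B_count (d - 2) (coset (v2 j1 j2 g1 g2) (GDRS_code d))
       = card {T. T \<subseteq> - {j1, j2} \<and> card T = d - 2 \<and>
           codeword_on (insert j1 (insert j2 T)) j2 / codeword_on (insert j1 (insert j2 T)) j1 = g2 / g1}"
    (is "_ = card ?Supports")
proof -
  let ?V = "coset (v2 j1 j2 g1 g2) (GDRS_code d)"
  let ?supp = "\<lambda>x::'a option \<Rightarrow> 'a. {j. x j \<noteq> 0}"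
  have "inj_on ?supp {x \<in> ?V. hweight x = d - 2}"
    using assms(1) by (intro inj_onI coset_GDRS_code_eq_if_same_support) auto
  moreover have "?supp ` {x \<in> ?V. hweight x = d - 2} = ?Supports"
  proof
    show "?supp ` {x \<in> ?V. hweight x = d - 2} \<subseteq> ?Supports"
      using coset_v2_support_avoids_and_ratio[OF assms] by (auto simp: hweight_def)
    show "?Supports \<subseteq> ?supp ` {x \<in> ?V. hweight x = d - 2}"
    proof
      fix T assume "T \<in> ?Supports"
      then obtain x where "x \<in> ?V" "?supp x = T"
        using coset_v2_vector_with_support[OF assms(1,3,4)] by blast
      moreover from this have "hweight x = d - 2"
        using \<open>T \<in> ?Supports\<close> by (simp add: hweight_def)
      ultimately show "T \<in> ?supp ` {x \<in> ?V. hweight x = d - 2}"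
        by blast
    qed
  qed
  ultimately show ?thesis
    unfolding B_count_def by (intro bij_betw_same_card) (simp add: bij_betw_def)
qed

theorem corollary3p7:
  fixes d :: nat and j1 j2 :: "'a::{finite,field} option"
    and g1 g2 \<beta> :: 'a and l :: nat
  assumes "5 \<le> d" and "d \<le> card (UNIV :: 'a set)"
    and "j1 \<noteq> j2" and "g1 \<noteq> 0" and "g2 \<noteq> 0"
    and "coset_weight (coset (v2 j1 j2 g1 g2) (GDRS_code d)) = 2"
    and "primitive_elem \<beta>"
    and "\<beta> ^ l = - g2 / g1"
  shows "B_count (d - 2) (coset (v2 j1 j2 g1 g2) (GDRS_code d))
           = P_plus (card (UNIV :: 'a set) - 1) (d - 2) l"
proof -
  have "2 \<le> d" and "d \<noteq> 4"
    using assms(1) by simp_all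
  then have "B_count (d - 2) (coset (v2 j1 j2 g1 g2) (GDRS_code d))
      = card {T. T \<subseteq> - {j1, j2} \<and> card T = d - 2 \<and>
          codeword_on (insert j1 (insert j2 T)) j2 / codeword_on (insert j1 (insert j2 T)) j1 = g2 / g1}"
    using assms(3-5) by (rule B_count_coset_v2)
  also have "\<dots> = card {T. T \<subseteq> - {j1, j2} \<and> card T = d - 2 \<and>
      (\<Prod>t\<in>T. proj_diff j1 t / proj_diff j2 t) = \<beta> ^ l}"
    using codeword_on_ratio[OF assms(3)] assms(8)
    by (intro arg_cong[where f = card] Collect_cong) (auto simp: minus_equation_iff[of "prod _ _"])
  also have "\<dots> = card {U. U \<subseteq> UNIV - {0} \<and> card U = d - 2 \<and> \<Prod>U = \<beta> ^ l}"
    by (rule card_subsets_prod_eq_bij[OF bij_betw_proj_diff_quotient[OF assms(3)]])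
  also have "\<dots> = P_plus (card (UNIV :: 'a set) - 1) (d - 2) l"
    by (rule P_plus_eq_card_subsets_prod[OF assms(7), symmetric])
  finally show ?thesis .
qed

end
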